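(* Let $T$ be a minimal homeomorphism of a compact metric space $X$, let $G$ be a locally compact second countable group, let $f\colon X\to G$ be a continuous regular cocycle and let $C\subseteq X\times G$ be a surjective $\mathbf T_f$-orbit closure. Then every nonempty relatively open subset of $C$ projects, under the first coordinate projection $\pi_X\colon X\times G\to X$, onto a subset of $X$ with nonempty interior.
   Context: The cocycle is $f(n,x)=f(T^{n-1}x)\cdots f(x)$ for $n\ge1$, $f(0,x)=\mathbf 1_G$, $f(n,x)=f(-n,T^nx)^{-1}$ for $n<0$. The skew product is $\mathbf T_f(x,g)=(Tx,f(x)g)$ on $X\times G$. A surjective $\mathbf T_f$-orbit closure is the closure of the $\mathbf T_f$-orbit of a single point of $X\times G$ which projects onto all of $X$ under $\pi_X$; $f$ is regular if such an orbit closure exists. *)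

theory Defs
  imports "HOL-Analysis.Analysis"
begin

definition topological_group :: "('g::topological_space \<Rightarrow> 'g \<Rightarrow> 'g) \<Rightarrow> 'g \<Rightarrow> ('g \<Rightarrow> 'g) \<Rightarrow> bool" where
  "topological_group mul e ginv \<longleftrightarrow>
     (\<forall>a b c. mul (mul a b) c = mul a (mul b c)) \<and>
     (\<forall>a. mul e a = a) \<and> (\<forall>a. mul a e = a) \<and>
     (\<forall>a. mul (ginv a) a = e) \<and> (\<forall>a. mul a (ginv a) = e) \<and>
     continuous_on UNIV (\<lambda>p. mul (fst p) (snd p)) \<and>
     continuous_on UNIV ginv"

definition minimal_map :: "('a::topological_space \<Rightarrow> 'a) \<Rightarrow> bool" where
  "minimal_map T \<longleftrightarrow> (\<forall>A. closed A \<and> A \<noteq> {} \<and> T ` A = A \<longrightarrow> A = UNIV)"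

definition cocycle :: "('g \<Rightarrow> 'g \<Rightarrow> 'g) \<Rightarrow> 'g \<Rightarrow> ('g \<Rightarrow> 'g) \<Rightarrow> ('a \<Rightarrow> 'a) \<Rightarrow> ('a \<Rightarrow> 'g) \<Rightarrow> int \<Rightarrow> 'a \<Rightarrow> 'g" where
  "cocycle mul e ginv T f n x =
     (if n \<ge> 0 then foldr (\<lambda>k acc. mul acc (f ((T ^^ k) x))) [0..<nat n] e
      else ginv (foldr (\<lambda>k acc. mul acc (f ((T ^^ k) ((inv T ^^ nat (-n)) x)))) [0..<nat (-n)] e))"

definition skew :: "('a \<Rightarrow> 'a) \<Rightarrow> ('g \<Rightarrow> 'g \<Rightarrow> 'g) \<Rightarrow> ('a \<Rightarrow> 'g) \<Rightarrow> 'a \<times> 'g \<Rightarrow> 'a \<times> 'g" where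
  "skew T mul f = (\<lambda>(x, g). (T x, mul (f x) g))"

definition full_orbit :: "('b \<Rightarrow> 'b) \<Rightarrow> 'b \<Rightarrow> 'b set" where
  "full_orbit S p = {(S ^^ n) p | n. True} \<union> {(inv S ^^ n) p | n. True}"

definition surjective_orbit_closure ::
  "('a \<Rightarrow> 'a) \<Rightarrow> ('g \<Rightarrow> 'g \<Rightarrow> 'g) \<Rightarrow> ('a \<Rightarrow> 'g) \<Rightarrow> ('a::topological_space \<times> 'g::topological_space) set \<Rightarrow> bool" where
  "surjective_orbit_closure T mul f C \<longleftrightarrow>
     (\<exists>p. C = closure (full_orbit (skew T mul f) p) \<and> fst ` C = UNIV)"

definition regular_cocycle ::
  "('a::topological_space \<Rightarrow> 'a) \<Rightarrow> ('g::topological_space \<Rightarrow> 'g \<Rightarrow> 'g) \<Rightarrow> ('a \<Rightarrow> 'g) \<Rightarrow> bool" where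
  "regular_cocycle T mul f \<longleftrightarrow> (\<exists>C. surjective_orbit_closure T mul f C)"

end

theory Submission
  imports Defs
begin

text \<open>Write \<open>C\<close> as the closure of the \<open>T\<^sub>f\<close>-orbit \<open>O\<close> of a point. Every integer power of \<open>T\<^sub>f\<close>
  is a continuous map of \<open>X \<times> G\<close> lying over a homeomorphism of \<open>X\<close> and commuting with right
  translations of \<open>G\<close>, and such lifts carry any point of \<open>O\<close> to any other one.
  Let \<open>U\<close> contain a point \<open>q\<close> of \<open>O\<close> with a product neighbourhood \<open>A \<times> B\<close>, and choose
  neighbourhoods \<open>N\<close> of the \<open>G\<close>-coordinate of \<open>q\<close> and \<open>V\<close> of the identity with \<open>N V \<subseteq> B\<close>.
  As \<open>G\<close> is locally compact and second countable, \<open>X\<close> is covered by countably many closed sets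
  \<open>\<pi>\<^sub>X(C \<inter> X \<times> K)\<close> with \<open>K\<close> compact inside an open \<open>W\<close> with \<open>W\<^sup>-\<^sup>1 W \<subseteq> V\<close>; by Baire,
  \<open>\<pi>\<^sub>X(O \<inter> X \<times> W)\<close> is dense in a nonempty open set. Moving one of its points to \<open>q\<close> by a lift \<open>\<Theta>\<close>,
  right equivariance puts \<open>\<Theta>(y, \<gamma>)\<close> into \<open>A \<times> B\<close> for all nearby \<open>(y, \<gamma>) \<in> O\<close> with \<open>\<gamma> \<in> W\<close>, so
  \<open>\<pi>\<^sub>X(O \<inter> A \<times> B)\<close> is somewhere dense. Shrinking \<open>A \<times> B\<close> to a product with compact closure
  turns density into containment in \<open>\<pi>\<^sub>X(U)\<close>.\<close>

lemma locally_compact_open_nbhd_compact_closure: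
  fixes B :: "'g::t2_space set"
  assumes lc: "locally_compact_space (euclidean :: 'g topology)" and "open B" "y \<in> B"
  obtains N where "open N" "y \<in> N" "compact (closure N)" "closure N \<subseteq> B"
proof -
  have Hausdorff: "Hausdorff_space (euclidean :: 'g topology)"
    unfolding Hausdorff_space_def disjnt_def by (metis hausdorff open_openin)
  then have "regular_space (euclidean :: 'g topology)"
    using lc locally_compact_Hausdorff_imp_regular_space by blast
  then obtain U1 V1 where UV: "open U1" "open V1" "y \<in> U1" "- B \<subseteq> V1" "U1 \<inter> V1 = {}"
    using assms(2,3) unfolding regular_space_def disjnt_def
    by (metis Compl_iff DiffI UNIV_I closed_closedin open_closed open_openin topspace_euclidean)
  have "closure U1 \<subseteq> B"
    using UV closure_minimal[of U1 "- V1"] by blast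
  moreover have "neighbourhood_base_of (\<lambda>U. openin euclidean U \<and> compactin euclidean (euclidean closure_of U))
      (euclidean :: 'g topology)"
    using lc locally_compact_space_neighbourhood_base_open_closure_of Hausdorff by blast
  then obtain U N where "open U" "open N" "compact (closure N)" "y \<in> U" "U \<subseteq> N" "N \<subseteq> U1"
    using UV unfolding neighbourhood_base_of
    by (metis open_openin euclidean_closure_of compactin_euclidean_iff)
  ultimately show ?thesis
    using that closure_mono[of N U1] by blast
qed

lemma compact_UNIV_imp_locally_compact_space:
  "compact (UNIV :: 'a::topological_space set) \<Longrightarrow> locally_compact_space (euclidean :: 'a topology)"
  by (metis compact_imp_locally_compact_space compact_space_def compactin_euclidean_iff topspace_euclidean)

lemma compact_fst_image_Int:
  "closed S \<Longrightarrow> compact K \<Longrightarrow> compact (fst ` (S \<inter> K))"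
  by (simp add: closed_Int_compact compact_continuous_image continuous_on_fst continuous_on_id)

lemma fst_image_closure_Int_Times_subset:
  assumes "open W"
  shows "fst ` (closure S \<inter> UNIV \<times> W) \<subseteq> closure (fst ` (S \<inter> UNIV \<times> W))"
proof -
  have "closure S \<inter> UNIV \<times> W \<subseteq> closure (S \<inter> UNIV \<times> W)"
    using open_Int_closure_subset[of "UNIV \<times> W" S] assms by (simp add: open_Times Int_commute)
  then have "fst ` (closure S \<inter> UNIV \<times> W) \<subseteq> fst ` closure (S \<inter> UNIV \<times> W)"
    by (rule image_mono)
  also have "\<dots> \<subseteq> closure (fst ` (S \<inter> UNIV \<times> W))"
    by (rule continuous_image_closure_subset[of UNIV]) (simp_all add: continuous_on_fst continuous_on_id)
  finally show ?thesis .
qed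

lemma Baire_closed_cover:
  fixes \<G> :: "'a::metric_space set set"
  assumes "compact (UNIV :: 'a set)" "countable \<G>" "\<And>P. P \<in> \<G> \<Longrightarrow> closed P" "\<Union>\<G> = UNIV"
  shows "\<exists>P\<in>\<G>. interior P \<noteq> {}"
proof (rule ccontr)
  assume "\<not> (\<exists>P\<in>\<G>. interior P \<noteq> {})"
  then have "closedin euclidean P \<and> euclidean interior_of P = {}" if "P \<in> \<G>" for P
    using assms(3) that closed_closedin by auto
  moreover have "locally_compact_space (euclidean :: 'a topology)"
    using compact_UNIV_imp_locally_compact_space[OF assms(1)] .
  ultimately have "euclidean interior_of \<Union>\<G> = {}"
    using Baire_category_alt[OF _ assms(2)] regular_space_euclidean by blast
  then show False
    using assms(4) by simp
qed

lemma Baire_fst_image_open_cover: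
  fixes Z :: "('a::metric_space \<times> 'g::{t2_space, second_countable_topology}) set"
  assumes "compact (UNIV :: 'a set)" and lc: "locally_compact_space (euclidean :: 'g topology)"
    and surj: "fst ` closure Z = UNIV"
    and "\<And>W. W \<in> \<U> \<Longrightarrow> open W" "\<Union>\<U> = UNIV"
  shows "\<exists>W\<in>\<U>. interior (closure (fst ` (Z \<inter> UNIV \<times> W))) \<noteq> {}"
proof -
  define \<N> where "\<N> = {N. open N \<and> compact (closure N) \<and> (\<exists>W\<in>\<U>. closure N \<subseteq> W)}"
  have "\<gamma> \<in> \<Union>\<N>" for \<gamma>
  proof -
    obtain W where W: "W \<in> \<U>" "\<gamma> \<in> W"
      using assms(5) by (metis UNIV_I UnionE)
    moreover obtain N where "open N" "\<gamma> \<in> N" "compact (closure N)" "closure N \<subseteq> W"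
      using locally_compact_open_nbhd_compact_closure[OF lc assms(4)[OF W(1)] W(2)] by blast
    ultimately show ?thesis
      unfolding \<N>_def by blast
  qed
  then have "\<Union>\<N> = UNIV"
    by (rule UNIV_eq_I[symmetric])
  moreover have "open N" if "N \<in> \<N>" for N
    using that unfolding \<N>_def by blast
  ultimately obtain \<N>' where \<N>': "\<N>' \<subseteq> \<N>" "countable \<N>'" "\<Union>\<N>' = UNIV"
    using Lindelof[of \<N>] by metis
  define \<G> where "\<G> = (\<lambda>N. fst ` (closure Z \<inter> UNIV \<times> closure N)) ` \<N>'"
  have "closed P" if P: "P \<in> \<G>" for P
  proof -
    obtain N where N: "N \<in> \<N>'" "P = fst ` (closure Z \<inter> UNIV \<times> closure N)"
      using P unfolding \<G>_def by blast
    then have "compact (closure N)"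
      using \<N>'(1) unfolding \<N>_def by blast
    then show ?thesis
      using N(2) assms(1) by (simp add: compact_imp_closed compact_fst_image_Int compact_Times)
  qed
  moreover have "x \<in> \<Union>\<G>" for x
  proof -
    obtain z where z: "z \<in> closure Z" "fst z = x"
      using surj by (metis UNIV_I imageE)
    obtain N where N: "N \<in> \<N>'" "snd z \<in> N"
      using \<N>'(3) by (metis UNIV_I UnionE)
    then have "x \<in> fst ` (closure Z \<inter> UNIV \<times> closure N)"
      using z closure_subset[of N] by (metis IntI SigmaI UNIV_I image_eqI prod.collapse subsetD)
    then show ?thesis
      unfolding \<G>_def using N(1) by blast
  qed
  then have "\<Union>\<G> = UNIV"
    by (rule UNIV_eq_I[symmetric])
  moreover have "countable \<G>"
    unfolding \<G>_def using \<N>'(2) by simp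
  ultimately obtain P where "P \<in> \<G>" "interior P \<noteq> {}"
    using Baire_closed_cover[OF assms(1)] by metis
  then obtain N where N: "N \<in> \<N>'" "interior (fst ` (closure Z \<inter> UNIV \<times> closure N)) \<noteq> {}"
    unfolding \<G>_def by blast
  then obtain W where W: "W \<in> \<U>" "closure N \<subseteq> W"
    using \<N>'(1) unfolding \<N>_def by auto
  have "fst ` (closure Z \<inter> UNIV \<times> closure N) \<subseteq> fst ` (closure Z \<inter> UNIV \<times> W)"
    using W(2) by blast
  also have "\<dots> \<subseteq> closure (fst ` (Z \<inter> UNIV \<times> W))"
    using fst_image_closure_Int_Times_subset[OF assms(4)[OF W(1)]] .
  finally show ?thesis
    using N(2) W(1) interior_mono by blast
qed

lemma full_orbit_image_subset:
  assumes "bij S"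
  shows "S ` full_orbit S p \<subseteq> full_orbit S p"
proof
  fix y assume "y \<in> S ` full_orbit S p"
  then obtain x where x: "x \<in> full_orbit S p" "y = S x" by blast
  from x(1) consider n where "x = (S ^^ n) p" | n where "x = (inv S ^^ n) p"
    unfolding full_orbit_def by blast
  then show "y \<in> full_orbit S p"
  proof cases
    case (1 n)
    then have "y = (S ^^ Suc n) p" using x(2) by simp
    then show ?thesis unfolding full_orbit_def by blast
  next
    case (2 n)
    show ?thesis
    proof (cases n)
      case 0
      then have "y = (S ^^ 1) p" using x(2) 2 by simp
      then show ?thesis unfolding full_orbit_def by blast
    next
      case (Suc m)
      then have "y = (inv S ^^ m) p"
        using x(2) 2 assms by (simp add: bij_is_surj surj_f_inv_f)
      then show ?thesis unfolding full_orbit_def by blast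
    qed
  qed
qed

lemma full_orbit_inv:
  assumes "bij S"
  shows "full_orbit (inv S) p = full_orbit S p"
  unfolding full_orbit_def inv_inv_eq[OF assms] by blast

lemma comp_closed_funpow:
  assumes "P id" "P f" "\<And>g h. P g \<Longrightarrow> P h \<Longrightarrow> P (g \<circ> h)"
  shows "P (f ^^ n)"
  by (induction n) (simp_all only: funpow.simps assms)

lemma full_orbit_connecting_map:
  assumes S: "bij S"
    and "P id" "P S" "P (inv S)" and comp: "\<And>\<Theta> \<Psi>. P \<Theta> \<Longrightarrow> P \<Psi> \<Longrightarrow> P (\<Theta> \<circ> \<Psi>)"
    and "z \<in> full_orbit S p" "q \<in> full_orbit S p"
  shows "\<exists>\<Theta>. P \<Theta> \<and> \<Theta> ` full_orbit S p \<subseteq> full_orbit S p \<and> \<Theta> z = q"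
proof -
  define P' where "P' \<Theta> \<longleftrightarrow> P \<Theta> \<and> \<Theta> ` full_orbit S p \<subseteq> full_orbit S p" for \<Theta>
  have P'_comp: "P' (\<Theta> \<circ> \<Psi>)" if "P' \<Theta>" "P' \<Psi>" for \<Theta> \<Psi>
    using that comp unfolding P'_def by (auto simp: image_subset_iff)
  have P'_id: "P' id"
    using assms(2) unfolding P'_def by simp
  have "P' S"
    using assms(3) full_orbit_image_subset[OF S] unfolding P'_def by blast
  then have "P' (S ^^ n)" for n
    using comp_closed_funpow[of P', OF P'_id _ P'_comp] by blast
  moreover have "P' (inv S)"
    using assms(4) full_orbit_image_subset[OF bij_imp_bij_inv[OF S]]
    unfolding P'_def full_orbit_inv[OF S] by blast
  then have "P' (inv S ^^ n)" for n
    using comp_closed_funpow[of P', OF P'_id _ P'_comp] by blast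
  ultimately have from_p: "\<exists>\<Theta>. P' \<Theta> \<and> \<Theta> p = w" if "w \<in> full_orbit S p" for w
    using that unfolding full_orbit_def by blast
  have to_p: "\<exists>\<Theta>. P' \<Theta> \<and> \<Theta> z = p"
  proof -
    from assms(6) consider n where "z = (S ^^ n) p" | n where "z = (inv S ^^ n) p"
      unfolding full_orbit_def by blast
    then show ?thesis
    proof cases
      case (1 n)
      then have "(inv S ^^ n) z = p"
        using inv_fn_o_fn_is_id[OF S, of n] by (metis comp_apply)
      then show ?thesis using \<open>\<And>n. P' (inv S ^^ n)\<close> by blast
    next
      case (2 n)
      then have "(S ^^ n) z = p"
        using fn_o_inv_fn_is_id[OF S, of n] by (metis comp_apply)
      then show ?thesis using \<open>\<And>n. P' (S ^^ n)\<close> by blast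
    qed
  qed
  then obtain \<Theta> \<Psi> where "P' \<Theta>" "\<Theta> z = p" "P' \<Psi>" "\<Psi> p = q"
    using from_p[OF assms(7)] by blast
  then have "P' (\<Psi> \<circ> \<Theta>) \<and> (\<Psi> \<circ> \<Theta>) z = q"
    using P'_comp by simp
  then show ?thesis
    unfolding P'_def by blast
qed

locale topgroup =
  fixes mul :: "'g::topological_space \<Rightarrow> 'g \<Rightarrow> 'g" (infixl "\<cdot>" 70) and e :: 'g and ginv :: "'g \<Rightarrow> 'g"
  assumes topological_group: "topological_group mul e ginv"
begin

lemma assoc: "a \<cdot> b \<cdot> c = a \<cdot> (b \<cdot> c)"
  and left_unit: "e \<cdot> a = a"
  and right_unit: "a \<cdot> e = a"
  and left_inverse: "ginv a \<cdot> a = e"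
  and right_inverse: "a \<cdot> ginv a = e"
  using topological_group unfolding topological_group_def by blast+

lemma inv_mult_cancel: "ginv a \<cdot> (a \<cdot> b) = b"
  by (metis assoc left_inverse left_unit)

lemma mult_inv_cancel: "a \<cdot> (ginv a \<cdot> b) = b"
  by (metis assoc right_inverse left_unit)

lemma continuous_on_mult:
  assumes "continuous_on S a" "continuous_on S b"
  shows "continuous_on S (\<lambda>z. a z \<cdot> b z)"
proof -
  have "continuous_on UNIV (\<lambda>p. fst p \<cdot> snd p)"
    using topological_group unfolding topological_group_def by blast
  then have "continuous_on S ((\<lambda>p. fst p \<cdot> snd p) \<circ> (\<lambda>z. (a z, b z)))"
    by (intro continuous_on_compose continuous_on_Pair assms) (rule continuous_on_subset, auto)
  then show ?thesis
    by (simp add: o_def)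
qed

lemma continuous_on_ginv:
  assumes "continuous_on S a"
  shows "continuous_on S (\<lambda>z. ginv (a z))"
proof -
  have "continuous_on UNIV ginv"
    using topological_group unfolding topological_group_def by blast
  then show ?thesis
    using continuous_on_compose2[OF _ assms] by blast
qed

lemma open_nbhds_mult_subset:
  assumes "open B" "g \<in> B"
  obtains N V where "open N" "open V" "g \<in> N" "e \<in> V" "\<And>n v. n \<in> N \<Longrightarrow> v \<in> V \<Longrightarrow> n \<cdot> v \<in> B"
proof -
  have "open ((\<lambda>p. fst p \<cdot> snd p) -` B)"
    by (intro open_vimage assms(1) continuous_on_mult continuous_on_fst continuous_on_snd continuous_on_id)
  moreover have "(g, e) \<in> (\<lambda>p. fst p \<cdot> snd p) -` B"
    using assms(2) by (simp add: right_unit)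
  ultimately obtain N V where "open N" "open V" "(g, e) \<in> N \<times> V" "N \<times> V \<subseteq> (\<lambda>p. fst p \<cdot> snd p) -` B"
    by (rule open_prod_elim)
  then show thesis
    using that[of N V] by (auto simp: subset_eq)
qed

lemma small_open_nbhd:
  assumes "open V" "e \<in> V"
  obtains W where "open W" "g \<in> W" "\<And>a b. a \<in> W \<Longrightarrow> b \<in> W \<Longrightarrow> ginv a \<cdot> b \<in> V"
proof -
  have "open ((\<lambda>p. ginv (fst p) \<cdot> snd p) -` V)"
    by (intro open_vimage assms(1) continuous_on_mult continuous_on_ginv continuous_on_fst continuous_on_snd
        continuous_on_id)
  moreover have "(g, g) \<in> (\<lambda>p. ginv (fst p) \<cdot> snd p) -` V"
    using assms(2) by (simp add: left_inverse)
  ultimately obtain W1 W2 where "open W1" "open W2" "(g, g) \<in> W1 \<times> W2"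
      "W1 \<times> W2 \<subseteq> (\<lambda>p. ginv (fst p) \<cdot> snd p) -` V"
    by (rule open_prod_elim)
  then show thesis
    using that[of "W1 \<inter> W2"] by (auto simp: subset_eq)
qed

text \<open>Integer powers of the skew product are equivariant lifts, since
  \<open>T\<^sub>f\<^sup>n (x, g) = (T\<^sup>n x, f(n, x) g)\<close>.\<close>

definition equivariant_lift :: "('a \<times> 'g \<Rightarrow> 'a \<times> 'g) \<Rightarrow> ('a::topological_space \<Rightarrow> 'a) \<Rightarrow> bool" where
  "equivariant_lift \<Theta> \<tau> \<longleftrightarrow> continuous_on UNIV \<Theta> \<and> (\<exists>\<sigma>. homeomorphism UNIV UNIV \<tau> \<sigma>) \<and>
     (\<forall>x g h. \<Theta> (x, g \<cdot> h) = (\<tau> x, snd (\<Theta> (x, g)) \<cdot> h))"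

lemma equivariant_lift_continuous: "equivariant_lift \<Theta> \<tau> \<Longrightarrow> continuous_on UNIV \<Theta>"
  unfolding equivariant_lift_def by blast

lemma equivariant_lift_base_continuous: "equivariant_lift \<Theta> \<tau> \<Longrightarrow> continuous_on UNIV \<tau>"
  unfolding equivariant_lift_def using homeomorphism_cont1 by blast

lemma equivariant_lift_base_open_image: "equivariant_lift \<Theta> \<tau> \<Longrightarrow> open A \<Longrightarrow> open (\<tau> ` A)"
  unfolding equivariant_lift_def using homeomorphism_imp_open_map by force

lemma equivariant_lift_mult: "equivariant_lift \<Theta> \<tau> \<Longrightarrow> \<Theta> (x, g \<cdot> h) = (\<tau> x, snd (\<Theta> (x, g)) \<cdot> h)"
  unfolding equivariant_lift_def by blast

lemma equivariant_lift_fst: "equivariant_lift \<Theta> \<tau> \<Longrightarrow> fst (\<Theta> z) = \<tau> (fst z)"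
  using arg_cong[OF equivariant_lift_mult[of \<Theta> \<tau> "fst z" "snd z" e], of fst] by (simp add: right_unit)

lemma equivariant_lift_id: "equivariant_lift id id"
  unfolding equivariant_lift_def using homeomorphism_ident by (auto simp: id_def)

lemma equivariant_lift_comp:
  assumes \<Theta>: "equivariant_lift \<Theta> \<tau>" and \<Psi>: "equivariant_lift \<Psi> \<sigma>"
  shows "equivariant_lift (\<Theta> \<circ> \<Psi>) (\<tau> \<circ> \<sigma>)"
  unfolding equivariant_lift_def
proof (intro conjI allI)
  show "continuous_on UNIV (\<Theta> \<circ> \<Psi>)"
    using equivariant_lift_continuous[OF \<Theta>] equivariant_lift_continuous[OF \<Psi>]
    by (metis continuous_on_compose continuous_on_subset top_greatest)
  obtain \<tau>' \<sigma>' where "homeomorphism UNIV UNIV \<tau> \<tau>'" "homeomorphism UNIV UNIV \<sigma> \<sigma>'"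
    using \<Theta> \<Psi> unfolding equivariant_lift_def by blast
  then show "\<exists>\<rho>. homeomorphism UNIV UNIV (\<tau> \<circ> \<sigma>) \<rho>"
    using homeomorphism_compose by blast
  fix x g h
  have "\<Psi> (x, g) = (\<sigma> x, snd (\<Psi> (x, g)))"
    using equivariant_lift_fst[OF \<Psi>, of "(x, g)"] by (metis fst_conv prod.collapse)
  then show "(\<Theta> \<circ> \<Psi>) (x, g \<cdot> h) = ((\<tau> \<circ> \<sigma>) x, snd ((\<Theta> \<circ> \<Psi>) (x, g)) \<cdot> h)"
    by (simp add: equivariant_lift_mult[OF \<Psi>] equivariant_lift_mult[OF \<Theta>])
qed

lemma equivariant_lift_left_mult:
  assumes "continuous_on UNIV c" "homeomorphism UNIV UNIV \<tau> \<sigma>"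
  shows "equivariant_lift (\<lambda>(x, g). (\<tau> x, c x \<cdot> g)) \<tau>"
proof -
  have fst: "continuous_on UNIV (\<lambda>z. fst z)"
    by (rule continuous_on_fst[OF continuous_on_id])
  have "continuous_on UNIV (\<lambda>z. \<tau> (fst z))"
    by (rule continuous_on_compose2[OF homeomorphism_cont1[OF assms(2)] fst]) simp
  moreover have "continuous_on UNIV (\<lambda>z. c (fst z))"
    by (rule continuous_on_compose2[OF assms(1) fst]) simp
  ultimately have "continuous_on UNIV (\<lambda>z. (\<tau> (fst z), c (fst z) \<cdot> snd z))"
    by (intro continuous_on_Pair continuous_on_mult continuous_on_snd continuous_on_id)
  then show ?thesis
    unfolding equivariant_lift_def split_beta using assms(2) by (auto simp: assoc)
qed

lemma skew_inverse:
  assumes "homeomorphism UNIV UNIV T S"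
  shows "bij (skew T mul f)" and "inv (skew T mul f) = (\<lambda>(x, g). (S x, ginv (f (S x)) \<cdot> g))"
proof -
  have ST: "S (T x) = x" and TS: "T (S x) = x" for x
    using assms by (simp_all add: homeomorphism_apply1 homeomorphism_apply2)
  define F' where "F' = (\<lambda>(x, g). (S x, ginv (f (S x)) \<cdot> g))"
  have "skew T mul f \<circ> F' = id" "F' \<circ> skew T mul f = id"
    by (auto simp: F'_def skew_def ST TS mult_inv_cancel inv_mult_cancel)
  then show "bij (skew T mul f)" "inv (skew T mul f) = F'"
    by (auto intro: o_bij inv_unique_comp)
qed

lemma skew_orbit_connecting_lift:
  assumes hom: "homeomorphism UNIV UNIV T S" and "continuous_on UNIV f"
    and "z \<in> full_orbit (skew T mul f) p" "q \<in> full_orbit (skew T mul f) p"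
  shows "\<exists>\<Theta> \<tau>. equivariant_lift \<Theta> \<tau> \<and>
           \<Theta> ` full_orbit (skew T mul f) p \<subseteq> full_orbit (skew T mul f) p \<and> \<Theta> z = q"
proof -
  have "equivariant_lift (skew T mul f) T"
    unfolding skew_def by (rule equivariant_lift_left_mult[OF assms(2) hom])
  moreover have "continuous_on UNIV (\<lambda>x. f (S x))"
    by (rule continuous_on_compose2[OF assms(2) homeomorphism_cont2[OF hom]]) simp
  then have "equivariant_lift (inv (skew T mul f)) S"
    unfolding skew_inverse(2)[OF hom]
    by (rule equivariant_lift_left_mult[OF continuous_on_ginv homeomorphism_symD[OF hom]])
  moreover have "\<exists>\<rho>. equivariant_lift (\<Theta> \<circ> \<Psi>) \<rho>"
    if "\<exists>\<tau>. equivariant_lift \<Theta> \<tau>" "\<exists>\<sigma>. equivariant_lift \<Psi> \<sigma>" for \<Theta> \<Psi>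
    using that equivariant_lift_comp by blast
  ultimately have "\<exists>\<Theta>. (\<exists>\<tau>. equivariant_lift \<Theta> \<tau>) \<and>
      \<Theta> ` full_orbit (skew T mul f) p \<subseteq> full_orbit (skew T mul f) p \<and> \<Theta> z = q"
    using equivariant_lift_id assms(3,4)
    by (intro full_orbit_connecting_map[OF skew_inverse(1)[OF hom]]) blast+
  then show ?thesis
    by blast
qed

lemma equivariant_lift_mem_Times:
  assumes "equivariant_lift \<Theta> \<tau>" "\<Theta> (y, \<gamma>') \<in> A \<times> N" "ginv \<gamma>' \<cdot> \<gamma> \<in> V"
    and "\<And>n v. n \<in> N \<Longrightarrow> v \<in> V \<Longrightarrow> n \<cdot> v \<in> B"
  shows "\<Theta> (y, \<gamma>) \<in> A \<times> B"
proof -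
  have "\<Theta> (y, \<gamma>) = \<Theta> (y, \<gamma>' \<cdot> (ginv \<gamma>' \<cdot> \<gamma>))"
    by (simp only: mult_inv_cancel)
  also have "\<dots> = (\<tau> y, snd (\<Theta> (y, \<gamma>')) \<cdot> (ginv \<gamma>' \<cdot> \<gamma>))"
    by (rule equivariant_lift_mult[OF assms(1)])
  finally show ?thesis
    using assms(2-4) equivariant_lift_fst[OF assms(1), of "(y, \<gamma>')"] by (auto simp: mem_Times_iff)
qed

end

locale lcsc_group = topgroup mul e ginv
  for mul :: "'g::{t2_space, second_countable_topology} \<Rightarrow> 'g \<Rightarrow> 'g" (infixl "\<cdot>" 70) and e ginv +
  assumes locally_compact: "locally_compact_space (euclidean :: 'g topology)"
begin

lemma Baire_small_fst_slice:
  fixes Z :: "('a::metric_space \<times> 'g) set"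
  assumes X: "compact (UNIV :: 'a set)" and surj: "fst ` closure Z = UNIV" and "open V" "e \<in> V"
  obtains W where "open W" "\<And>a b. a \<in> W \<Longrightarrow> b \<in> W \<Longrightarrow> ginv a \<cdot> b \<in> V"
    and "interior (closure (fst ` (Z \<inter> UNIV \<times> W))) \<noteq> {}"
proof -
  define \<U> where "\<U> = {W. open W \<and> (\<forall>a\<in>W. \<forall>b\<in>W. ginv a \<cdot> b \<in> V)}"
  have "\<gamma> \<in> \<Union>\<U>" for \<gamma>
  proof -
    obtain W where "open W" "\<gamma> \<in> W" "\<And>a b. a \<in> W \<Longrightarrow> b \<in> W \<Longrightarrow> ginv a \<cdot> b \<in> V"
      using small_open_nbhd[OF assms(3,4), where g = \<gamma>] by blast
    then show ?thesis
      unfolding \<U>_def by blast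
  qed
  then have "\<Union>\<U> = UNIV"
    by (rule UNIV_eq_I[symmetric])
  moreover have "open W" if "W \<in> \<U>" for W
    using that unfolding \<U>_def by blast
  ultimately obtain W where "W \<in> \<U>" "interior (closure (fst ` (Z \<inter> UNIV \<times> W))) \<noteq> {}"
    using Baire_fst_image_open_cover[OF X locally_compact surj, of \<U>] by blast
  then show thesis
    using that unfolding \<U>_def by blast
qed

lemma interior_closure_fst_image_nonempty:
  fixes Orb :: "('a::metric_space \<times> 'g) set"
  assumes X: "compact (UNIV :: 'a set)" and surj: "fst ` closure Orb = UNIV"
    and connect: "\<And>z. z \<in> Orb \<Longrightarrow> \<exists>\<Theta> \<tau>. equivariant_lift \<Theta> \<tau> \<and> \<Theta> ` Orb \<subseteq> Orb \<and> \<Theta> z = q"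
    and "open A" "open B" "q \<in> A \<times> B"
  shows "interior (closure (fst ` (Orb \<inter> A \<times> B))) \<noteq> {}"
proof -
  \<comment> \<open>\<open>V\<close> is fixed before the lift \<open>\<Theta>\<close> is chosen; right equivariance makes it work for any \<open>\<Theta>\<close>.\<close>
  obtain N V where NV: "open N" "open V" "snd q \<in> N" "e \<in> V" "\<And>n v. n \<in> N \<Longrightarrow> v \<in> V \<Longrightarrow> n \<cdot> v \<in> B"
    using open_nbhds_mult_subset[OF assms(5)] assms(6) by (metis mem_Times_iff)
  obtain W where W: "open W" "\<And>a b. a \<in> W \<Longrightarrow> b \<in> W \<Longrightarrow> ginv a \<cdot> b \<in> V"
      and Y0: "interior (closure (fst ` (Orb \<inter> UNIV \<times> W))) \<noteq> {}" (is "interior (closure ?E) \<noteq> {}")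
    using Baire_small_fst_slice[OF X surj NV(2,4)] by blast
  define Y0 where "Y0 = interior (closure ?E)"
  have "Y0 \<inter> ?E \<noteq> {}"
    using Y0 open_Int_closure_eq_empty[of Y0 ?E] interior_subset unfolding Y0_def by blast
  then obtain x1 \<gamma>1 where z1: "(x1, \<gamma>1) \<in> Orb" "\<gamma>1 \<in> W" "x1 \<in> Y0"
    by auto
  then obtain \<Theta> \<tau> where \<Theta>: "equivariant_lift \<Theta> \<tau>" "\<Theta> ` Orb \<subseteq> Orb" "\<Theta> (x1, \<gamma>1) = q"
    using connect by blast
  define Y where "Y = Y0 \<inter> (\<lambda>y. \<Theta> (y, \<gamma>1)) -` (A \<times> N)"
  have "continuous_on UNIV (\<lambda>y. \<Theta> (y, \<gamma>1))"
    by (rule continuous_on_compose2[OF equivariant_lift_continuous[OF \<Theta>(1)]])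
      (auto intro: continuous_on_Pair continuous_on_id continuous_on_const)
  then have Y: "open Y" "x1 \<in> Y"
    unfolding Y_def using z1(3) \<Theta>(3) assms(4,6) NV(1,3) by (auto simp: Y0_def open_Times open_vimage mem_Times_iff)
  have "\<tau> ` (Y \<inter> ?E) \<subseteq> fst ` (Orb \<inter> A \<times> B)"
  proof
    fix x assume "x \<in> \<tau> ` (Y \<inter> ?E)"
    then obtain y \<gamma> where y: "x = \<tau> y" "y \<in> Y" "(y, \<gamma>) \<in> Orb" "\<gamma> \<in> W"
      by auto
    then have "\<Theta> (y, \<gamma>) \<in> Orb \<inter> A \<times> B"
      using \<Theta>(1,2) equivariant_lift_mem_Times[OF \<Theta>(1) _ W(2)[OF z1(2) y(4)] NV(5)] unfolding Y_def by auto
    then show "x \<in> fst ` (Orb \<inter> A \<times> B)"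
      using y(1) equivariant_lift_fst[OF \<Theta>(1), of "(y, \<gamma>)"] by force
  qed
  have "Y \<subseteq> closure (Y \<inter> ?E)"
    using open_Int_closure_subset[OF Y(1), of ?E] interior_subset[of "closure ?E"] unfolding Y_def Y0_def by blast
  then have "\<tau> ` Y \<subseteq> \<tau> ` closure (Y \<inter> ?E)"
    by (rule image_mono)
  also have "\<dots> \<subseteq> closure (\<tau> ` (Y \<inter> ?E))"
    using equivariant_lift_base_continuous[OF \<Theta>(1)] by (rule continuous_image_closure_subset) simp
  also have "\<dots> \<subseteq> closure (fst ` (Orb \<inter> A \<times> B))"
    by (rule closure_mono) fact
  finally show ?thesis
    using equivariant_lift_base_open_image[OF \<Theta>(1) Y(1)] Y(2) interior_maximal by blast
qed

lemma interior_fst_image_openin_closure_orbit: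
  fixes Orb :: "('a::metric_space \<times> 'g) set"
  assumes X: "compact (UNIV :: 'a set)" and surj: "fst ` closure Orb = UNIV"
    and connect: "\<And>z q. z \<in> Orb \<Longrightarrow> q \<in> Orb \<Longrightarrow> \<exists>\<Theta> \<tau>. equivariant_lift \<Theta> \<tau> \<and> \<Theta> ` Orb \<subseteq> Orb \<and> \<Theta> z = q"
    and U: "openin (top_of_set (closure Orb)) U" "U \<noteq> {}"
  shows "interior (fst ` U) \<noteq> {}"
proof -
  obtain U' where U': "open U'" "U = closure Orb \<inter> U'"
    using U(1) unfolding openin_open by blast
  then have "U' \<inter> Orb \<noteq> {}"
    using U(2) open_Int_closure_eq_empty[OF U'(1)] by blast
  then obtain q where q: "q \<in> Orb" "q \<in> U'"
    by blast
  obtain A B where AB: "open A" "open B" "q \<in> A \<times> B" "A \<times> B \<subseteq> U'"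
    using open_prod_elim[OF U'(1) q(2)] by blast
  obtain A1 where A1: "open A1" "fst q \<in> A1" "compact (closure A1)" "closure A1 \<subseteq> A"
    using locally_compact_open_nbhd_compact_closure[OF compact_UNIV_imp_locally_compact_space[OF X] AB(1)] AB(3)
    by (metis mem_Times_iff)
  obtain B1 where B1: "open B1" "snd q \<in> B1" "compact (closure B1)" "closure B1 \<subseteq> B"
    using locally_compact_open_nbhd_compact_closure[OF locally_compact AB(2)] AB(3)
    by (metis mem_Times_iff)
  have "interior (closure (fst ` (Orb \<inter> A1 \<times> B1))) \<noteq> {}"
    using A1(1,2) B1(1,2) connect[OF _ q(1)]
    by (intro interior_closure_fst_image_nonempty[OF X surj]) (auto simp: open_Times mem_Times_iff)
  moreover have "closure (fst ` (Orb \<inter> A1 \<times> B1)) \<subseteq> fst ` (closure Orb \<inter> closure A1 \<times> closure B1)"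
    using A1(3) B1(3)
    by (intro closure_minimal image_mono Int_mono closure_subset Sigma_mono compact_imp_closed
        compact_fst_image_Int closed_closure compact_Times)
  moreover have "\<dots> \<subseteq> fst ` U"
    using A1(4) B1(4) AB(4) U'(2) by blast
  ultimately show ?thesis
    using interior_mono by blast
qed

end

theorem lemma2p2:
  fixes T :: "'a::metric_space \<Rightarrow> 'a"
    and mul :: "'g::{t2_space, second_countable_topology} \<Rightarrow> 'g \<Rightarrow> 'g"
    and e :: 'g and ginv :: "'g \<Rightarrow> 'g"
    and f :: "'a \<Rightarrow> 'g"
    and C :: "('a \<times> 'g) set"
  assumes "compact (UNIV :: 'a set)"
    and "\<exists>S. homeomorphism UNIV UNIV T S"
    and "minimal_map T"
    and "topological_group mul e ginv"
    and "locally_compact_space (euclidean :: 'g topology)"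
    and "continuous_on UNIV f"
    and "regular_cocycle T mul f"
    and "surjective_orbit_closure T mul f C"
  shows "\<forall>U. openin (top_of_set C) U \<and> U \<noteq> {} \<longrightarrow> interior (fst ` U) \<noteq> {}"
proof -
  interpret lcsc_group mul e ginv
    using assms(4,5) by (simp add: lcsc_group_def lcsc_group_axioms_def topgroup_def)
  obtain S where hom: "homeomorphism UNIV UNIV T S"
    using assms(2) by blast
  obtain p where C: "C = closure (full_orbit (skew T mul f) p)" "fst ` C = UNIV"
    using assms(8) unfolding surjective_orbit_closure_def by blast
  show ?thesis
    using interior_fst_image_openin_closure_orbit[OF assms(1), of "full_orbit (skew T mul f) p"]
      skew_orbit_connecting_lift[OF hom assms(6)] C by blast
qed

end
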